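(* Let $\mathbf{X}\in\mathbb{R}^{n\times p}$, $\mathbf{A}\in\mathbb{R}^n$ with $\mathbf{A}\neq\mathbf{0}$, and $\mathbf{Y}\in\mathbb{R}^n$ be given, and define $\mathbf{Q}_A=I_n-\mathbf{A}\mathbf{A}^\top/\|\mathbf{A}\|^2$, $\mathbf{Z}=\mathbf{Q}_A\mathbf{X}$, $\mathbf{a}=\mathbf{X}^\top\mathbf{A}$, $\mathbf{z}=\mathbf{X}^\top\mathbf{Y}-\frac{\mathbf{A}^\top\mathbf{Y}}{\|\mathbf{A}\|^2}\mathbf{a}$ $(=\mathbf{Z}^\top\mathbf{Y})$, and $\mathbf{V}=\mathbf{X}^\top\mathbf{X}-\mathbf{a}\mathbf{a}^\top/\|\mathbf{A}\|^2$ $(=\mathbf{Z}^\top\mathbf{Z})$. Assume $\mathbf{V}$ is positive definite and let $\mathbf{p}=\mathbf{V}^{-1}\mathbf{a}$, $\mathbf{q}=\mathbf{V}^{-1}\mathbf{z}$, both assumed nonzero. Equip $\mathbb{R}^p$ with the inner product $\langle\mathbf{u}_1,\mathbf{u}_2\rangle_{\mathbf{V}}=\mathbf{u}_1^\top\mathbf{V}\mathbf{u}_2$, norm $\|\mathbf{u}\|_{\mathbf{V}}=\sqrt{\mathbf{u}^\top\mathbf{V}\mathbf{u}}$, and angle $\angle_{\mathbf{V}}(\mathbf{u}_1,\mathbf{u}_2)$ defined by $\cos\angle_{\mathbf{V}}(\mathbf{u}_1,\mathbf{u}_2)=\langle\mathbf{u}_1,\mathbf{u}_2\rangle_{\mathbf{V}}/(\|\mathbf{u}_1\|_{\mathbf{V}}\|\mathbf{u}_2\|_{\mathbf{V}})$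 for nonzero vectors. Let $\varphi=\angle_{\mathbf{V}}(\mathbf{p},\mathbf{q})$. Then, over nonzero $\mathbf{w}\in\mathbb{R}^p$, the alignment $\cos\angle_{\mathbf{V}}(\mathbf{w},\mathbf{p})\cdot\cos\angle_{\mathbf{V}}(\mathbf{w},\mathbf{q})$ is maximised by the direction $\mathbf{w}^*$ that bisects the angle between $\mathbf{p}$ and $\mathbf{q}$, i.e. $\angle_{\mathbf{V}}(\mathbf{w}^*,\mathbf{p})=\angle_{\mathbf{V}}(\mathbf{w}^*,\mathbf{q})=\varphi/2$, and for the function $$h(\mathbf{w})=\frac{(\mathbf{w}^\top\mathbf{a})(\mathbf{w}^\top\mathbf{z})}{\|\mathbf{A}\|^2\,(\mathbf{w}^\top\mathbf{V}\mathbf{w})}$$ one has $$h(\mathbf{w}^* )=\frac{\|\mathbf{p}\|_{\mathbf{V}}\|\mathbf{q}\|_{\mathbf{V}}}{\|\mathbf{A}\|^2}\cdot\frac{1+\cos\varphi}{2}.$$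
   Context: $\mathbf{X}$ is a matrix of candidate mediators, $\mathbf{A}$ a treatment vector and $\mathbf{Y}$ an outcome vector (all column-centred). For a weight vector $\mathbf{w}$, the OLS path coefficients of the composite mediator $\mathbf{X}\mathbf{w}$ are $\hat\alpha(\mathbf{w})=\mathbf{w}^\top\mathbf{a}/\|\mathbf{A}\|^2$ and $\hat\beta(\mathbf{w})=\mathbf{w}^\top\mathbf{z}/(\mathbf{w}^\top\mathbf{V}\mathbf{w})$, so $h(\mathbf{w})=\hat\alpha(\mathbf{w})\hat\beta(\mathbf{w})$ is the sample indirect effect; $h$ is invariant under rescaling of $\mathbf{w}$ by nonzero scalars. The identity $h(\mathbf{w})=\frac{\|\mathbf{p}\|_{\mathbf{V}}\|\mathbf{q}\|_{\mathbf{V}}}{\|\mathbf{A}\|^2}\cos\angle_{\mathbf{V}}(\mathbf{w},\mathbf{p})\cos\angle_{\mathbf{V}}(\mathbf{w},\mathbf{q})$ holds for nonzero $\mathbf{w}$. *)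

theory Defs
  imports "HOL-Analysis.Analysis"
begin

definition outer :: "real^'p \<Rightarrow> real^'p \<Rightarrow> real^'p^'p" where
  "outer u v = (\<chi> i j. u$i * v$j)"

definition pos_definite :: "real^'p^'p \<Rightarrow> bool" where
  "pos_definite V \<longleftrightarrow> transpose V = V \<and> (\<forall>u. u \<noteq> 0 \<longrightarrow> u \<bullet> (V *v u) > 0)"

definition vinner :: "real^'p^'p \<Rightarrow> real^'p \<Rightarrow> real^'p \<Rightarrow> real" where
  "vinner V u1 u2 = u1 \<bullet> (V *v u2)"

definition vnorm :: "real^'p^'p \<Rightarrow> real^'p \<Rightarrow> real" where
  "vnorm V u = sqrt (vinner V u u)"

definition vcos :: "real^'p^'p \<Rightarrow> real^'p \<Rightarrow> real^'p \<Rightarrow> real" where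
  "vcos V u1 u2 = vinner V u1 u2 / (vnorm V u1 * vnorm V u2)"

definition vangle :: "real^'p^'p \<Rightarrow> real^'p \<Rightarrow> real^'p \<Rightarrow> real" where
  "vangle V u1 u2 = arccos (vcos V u1 u2)"

definition hfun :: "real^'n \<Rightarrow> real^'p \<Rightarrow> real^'p \<Rightarrow> real^'p^'p \<Rightarrow> real^'p \<Rightarrow> real" where
  "hfun A a z V w = (w \<bullet> a) * (w \<bullet> z) / ((norm A)\<^sup>2 * (w \<bullet> (V *v w)))"

end

theory Submission
  imports Defs
begin

text \<open>
  In the V-geometry put \<open>s = \<parallel>q\<parallel> p + \<parallel>p\<parallel> q\<close>, so that
  \<open>\<langle>w, s\<rangle> = \<parallel>w\<parallel>\<parallel>p\<parallel>\<parallel>q\<parallel> (cos(w,p) + cos(w,q))\<close> and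
  \<open>\<parallel>s\<parallel>\<^sup>2 = 2 \<parallel>p\<parallel>\<^sup>2\<parallel>q\<parallel>\<^sup>2 (1 + cos \<phi>)\<close>.
  Cauchy-Schwarz for \<open>w\<close> and \<open>s\<close> together with AM-GM gives
  \<open>cos(w,p) cos(w,q) \<le> (1 + cos \<phi>)/2 = cos\<^sup>2(\<phi>/2)\<close>, with equality for any direction
  at angle \<open>\<phi>/2\<close> to both \<open>p\<close> and \<open>q\<close>. Such a direction is \<open>s\<close> itself unless \<open>p\<close> and
  \<open>q\<close> are antiparallel, in which case any vector V-orthogonal to \<open>p\<close> works (this needs
  dimension at least 2). Since \<open>V p = a\<close> and \<open>V q = z\<close>,
  \<open>h(w) = \<parallel>p\<parallel>\<parallel>q\<parallel>/\<parallel>A\<parallel>\<^sup>2 \<cdot> cos(w,p) cos(w,q)\<close>.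
\<close>

lemma vinner_commute:
  assumes "transpose V = V"
  shows "vinner V u w = vinner V w u"
  by (metis assms dot_lmul_matrix inner_commute vector_transpose_matrix vinner_def)

lemma vinner_add_left: "vinner V (u + v) w = vinner V u w + vinner V v w"
  by (simp add: vinner_def inner_add_left)

lemma vinner_add_right: "vinner V w (u + v) = vinner V w u + vinner V w v"
  by (simp add: vinner_def matrix_vector_right_distrib inner_add_right)

lemma vinner_scaleR_left: "vinner V (c *\<^sub>R u) w = c * vinner V u w"
  by (simp add: vinner_def)

lemma vinner_scaleR_right: "vinner V w (c *\<^sub>R u) = c * vinner V w u"
  by (simp add: vinner_def matrix_vector_mult_scaleR)

lemma vinner_zero_left [simp]: "vinner V 0 u = 0"
  by (simp add: vinner_def)

lemma vinner_zero_right [simp]: "vinner V u 0 = 0"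
  by (simp add: vinner_def)

lemma pos_definite_symmetric: "pos_definite V \<Longrightarrow> transpose V = V"
  by (simp add: pos_definite_def)

lemma vinner_self_pos: "pos_definite V \<Longrightarrow> u \<noteq> 0 \<Longrightarrow> vinner V u u > 0"
  by (simp add: pos_definite_def vinner_def)

lemma vinner_self_nonneg: "pos_definite V \<Longrightarrow> vinner V u u \<ge> 0"
  using vinner_self_pos[of V u] by (cases "u = 0") auto

lemma vinner_self_eq_0: "pos_definite V \<Longrightarrow> vinner V u u = 0 \<longleftrightarrow> u = 0"
  using vinner_self_pos[of V u] by fastforce

lemma vnorm_pos: "pos_definite V \<Longrightarrow> u \<noteq> 0 \<Longrightarrow> vnorm V u > 0"
  by (simp add: vnorm_def vinner_self_pos)

lemma vnorm_nonneg: "pos_definite V \<Longrightarrow> vnorm V u \<ge> 0"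
  by (simp add: vnorm_def vinner_self_nonneg)

lemma vnorm_zero [simp]: "vnorm V 0 = 0"
  by (simp add: vnorm_def)

lemma power2_vnorm: "pos_definite V \<Longrightarrow> (vnorm V u)\<^sup>2 = vinner V u u"
  by (simp add: vnorm_def vinner_self_nonneg)

lemma pos_definite_right_inverse:
  assumes "pos_definite V"
  shows "V *v (matrix_inv V *v x) = x"
proof -
  have "x = 0" if "V *v x = 0" for x
    using vinner_self_eq_0[OF assms, of x] that by (simp add: vinner_def)
  then have "\<exists>B. B ** V = mat 1"
    by (simp add: matrix_left_invertible_ker)
  then have "invertible V"
    by (simp add: invertible_left_inverse)
  then have "V ** matrix_inv V = mat 1"
    unfolding invertible_def matrix_inv_def by (rule someI_ex[THEN conjunct1])
  then show ?thesis
    by (simp add: matrix_vector_mul_assoc)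
qed

lemma vinner_Cauchy_Schwarz:
  assumes "pos_definite V"
  shows "(vinner V u w)\<^sup>2 \<le> vinner V u u * vinner V w w"
proof (cases "w = 0")
  case False
  define t where "t = vinner V u w / vinner V w w"
  have ww: "vinner V w w > 0"
    using assms False by (rule vinner_self_pos)
  have "0 \<le> vinner V (u - t *\<^sub>R w) (u - t *\<^sub>R w)"
    using assms by (rule vinner_self_nonneg)
  also have "\<dots> = vinner V u u - 2 * t * vinner V u w + t\<^sup>2 * vinner V w w"
    using vinner_commute[OF pos_definite_symmetric[OF assms], of w u]
    by (simp add: vinner_def inner_diff_left inner_diff_right matrix_vector_mult_diff_distrib
        matrix_vector_mult_scaleR algebra_simps power2_eq_square)
  also have "\<dots> = vinner V u u - (vinner V u w)\<^sup>2 / vinner V w w"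
    using ww by (simp add: t_def field_simps power2_eq_square)
  finally show ?thesis
    using ww by (simp add: field_simps)
qed simp

lemma vinner_eq_vcos_mult:
  assumes "pos_definite V"
  shows "vinner V u w = vcos V u w * vnorm V u * vnorm V w"
proof (cases "u = 0 \<or> w = 0")
  case False
  then show ?thesis
    using vnorm_pos[OF assms, of u] vnorm_pos[OF assms, of w] by (simp add: vcos_def)
qed auto

lemma abs_vcos_le_1:
  assumes "pos_definite V"
  shows "\<bar>vcos V u w\<bar> \<le> 1"
proof -
  have "(vinner V u w)\<^sup>2 \<le> (vnorm V u * vnorm V w)\<^sup>2"
    using vinner_Cauchy_Schwarz[OF assms] by (simp add: power_mult_distrib power2_vnorm[OF assms])
  moreover have nonneg: "0 \<le> vnorm V u * vnorm V w"
    using vnorm_nonneg[OF assms] by simp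
  ultimately have "\<bar>vinner V u w\<bar> \<le> vnorm V u * vnorm V w"
    using power2_le_imp_le[of "\<bar>vinner V u w\<bar>"] by simp
  then show ?thesis
    using nonneg
    by (cases "vnorm V u * vnorm V w = 0")
      (auto simp: vcos_def abs_div divide_le_eq_1 order.strict_iff_order)
qed

lemma vcos_commute: "pos_definite V \<Longrightarrow> vcos V u w = vcos V w u"
  by (simp add: vcos_def vinner_commute pos_definite_symmetric mult.commute)

lemma cos_vangle: "pos_definite V \<Longrightarrow> cos (vangle V u w) = vcos V u w"
  by (simp add: vangle_def cos_arccos_abs abs_vcos_le_1)

lemma cos_half_arccos_squared:
  assumes "\<bar>x\<bar> \<le> 1"
  shows "(cos (arccos x / 2))\<^sup>2 = (1 + x) / 2"
  using cos_double_cos[of "arccos x / 2"] cos_arccos_abs[OF assms] by simp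

lemma arccos_sqrt_half:
  assumes "\<bar>x\<bar> \<le> 1"
  shows "arccos (sqrt ((1 + x) / 2)) = arccos x / 2"
proof -
  have arccos_bounds: "0 \<le> arccos x" "arccos x \<le> pi"
    using arccos_bounded[of x] assms by (auto simp: abs_le_iff)
  then have bounds: "0 \<le> arccos x / 2" "arccos x / 2 \<le> pi"
    by simp_all
  have "cos (arccos x / 2) \<ge> 0"
    using arccos_bounds by (intro cos_ge_zero) auto
  then have "sqrt ((1 + x) / 2) = cos (arccos x / 2)"
    using cos_half_arccos_squared[OF assms] by (metis real_sqrt_unique)
  then show ?thesis
    using arccos_cos[OF bounds] by (simp only:)
qed

definition vbisector :: "real^'p^'p \<Rightarrow> real^'p \<Rightarrow> real^'p \<Rightarrow> real^'p" where
  "vbisector V p q = vnorm V q *\<^sub>R p + vnorm V p *\<^sub>R q"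

lemma vbisector_commute: "vbisector V p q = vbisector V q p"
  by (simp add: vbisector_def add.commute)

lemma vinner_vbisector_right:
  assumes "pos_definite V"
  shows "vinner V w (vbisector V p q)
    = vnorm V w * vnorm V p * vnorm V q * (vcos V w p + vcos V w q)"
  by (simp add: vbisector_def vinner_add_right vinner_scaleR_right vinner_eq_vcos_mult[OF assms]
      algebra_simps)

lemma vinner_vbisector_left:
  assumes "pos_definite V"
  shows "vinner V (vbisector V p q) p = (vnorm V p)\<^sup>2 * vnorm V q * (1 + vcos V p q)"
  using vinner_eq_vcos_mult[OF assms, of q p] vcos_commute[OF assms, of q p]
    power2_vnorm[OF assms, of p]
  by (simp add: vbisector_def vinner_add_left vinner_scaleR_left algebra_simps power2_eq_square)

lemma vinner_vbisector_self:
  assumes "pos_definite V"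
  shows "vinner V (vbisector V p q) (vbisector V p q)
    = 2 * (vnorm V p * vnorm V q)\<^sup>2 * (1 + vcos V p q)"
proof -
  have "vinner V (vbisector V p q) (vbisector V p q)
      = vnorm V q * vinner V (vbisector V p q) p + vnorm V p * vinner V (vbisector V q p) q"
    by (simp add: vbisector_def[of V p q] vinner_add_right vinner_scaleR_right vbisector_commute)
  also have "\<dots> = 2 * (vnorm V p * vnorm V q)\<^sup>2 * (1 + vcos V p q)"
    by (simp add: vinner_vbisector_left[OF assms] vcos_commute[OF assms, of q p] power2_eq_square)
  finally show ?thesis .
qed

lemma vcos_vbisector_left:
  assumes pd: "pos_definite V" and "p \<noteq> 0" "q \<noteq> 0" and x: "-1 < vcos V p q"
  shows "vcos V (vbisector V p q) p = sqrt ((1 + vcos V p q) / 2)"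
proof -
  have np: "vnorm V p > 0" and nq: "vnorm V q > 0"
    using vnorm_pos[OF pd] assms by auto
  have "(vcos V (vbisector V p q) p)\<^sup>2
      = (vinner V (vbisector V p q) p)\<^sup>2
        / (vinner V (vbisector V p q) (vbisector V p q) * vinner V p p)"
    by (simp add: vcos_def power_divide power_mult_distrib power2_vnorm[OF pd])
  also have "\<dots> = ((vnorm V p)\<^sup>2 * vnorm V q * (1 + vcos V p q))\<^sup>2
        / (2 * (vnorm V p * vnorm V q)\<^sup>2 * (1 + vcos V p q) * (vnorm V p)\<^sup>2)"
    by (simp add: vinner_vbisector_left[OF pd] vinner_vbisector_self[OF pd] power2_vnorm[OF pd])
  also have "\<dots> = (1 + vcos V p q) / 2"
  proof -
    have "((vnorm V p)\<^sup>2 * vnorm V q * t)\<^sup>2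
        / (2 * (vnorm V p * vnorm V q)\<^sup>2 * t * (vnorm V p)\<^sup>2) = t / 2"
      if "t > 0" for t
      using np nq that by (simp add: field_simps power2_eq_square)
    then show ?thesis
      using x by simp
  qed
  finally have "(vcos V (vbisector V p q) p)\<^sup>2 = (1 + vcos V p q) / 2" .
  moreover have "vcos V (vbisector V p q) p \<ge> 0"
    using np nq x vnorm_nonneg[OF pd]
    unfolding vcos_def[of V "vbisector V p q"] vinner_vbisector_left[OF pd]
    by (intro divide_nonneg_nonneg mult_nonneg_nonneg) auto
  ultimately show ?thesis
    by (simp add: real_sqrt_unique)
qed

lemma vbisector_nonzero:
  assumes pd: "pos_definite V" and "p \<noteq> 0" "q \<noteq> 0" and "-1 < vcos V p q"
  shows "vbisector V p q \<noteq> 0"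
proof -
  have "vinner V (vbisector V p q) (vbisector V p q) > 0"
    using vnorm_pos[OF pd assms(2)] vnorm_pos[OF pd assms(3)] assms(4)
    by (simp add: vinner_vbisector_self[OF pd])
  then show ?thesis
    by auto
qed

lemma vangle_vbisector:
  assumes pd: "pos_definite V" and "p \<noteq> 0" "q \<noteq> 0" and "-1 < vcos V p q"
  shows "vangle V (vbisector V p q) p = vangle V p q / 2"
    and "vangle V (vbisector V p q) q = vangle V p q / 2"
proof -
  show "vangle V (vbisector V p q) p = vangle V p q / 2"
    using vcos_vbisector_left[OF assms] abs_vcos_le_1[OF pd]
    by (simp add: vangle_def arccos_sqrt_half)
  then show "vangle V (vbisector V p q) q = vangle V p q / 2"
    using vcos_vbisector_left[OF pd assms(3,2)] abs_vcos_le_1[OF pd] assms(4)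
    by (simp add: vangle_def arccos_sqrt_half vbisector_commute vcos_commute[OF pd, of q p])
qed

lemma vcos_mult_vcos_le:
  assumes pd: "pos_definite V"
  shows "vcos V w p * vcos V w q \<le> (1 + vcos V p q) / 2"
proof (cases "w = 0 \<or> p = 0 \<or> q = 0")
  case True
  then have "vcos V w p * vcos V w q = 0"
    by (auto simp: vcos_def)
  then show ?thesis
    using abs_vcos_le_1[OF pd, of p q] by (auto simp: abs_le_iff)
next
  case False
  define k where "k = vnorm V w * vnorm V p * vnorm V q"
  have "k > 0"
    using False vnorm_pos[OF pd] by (simp add: k_def)
  have "vinner V w (vbisector V p q) = k * (vcos V w p + vcos V w q)"
    by (simp add: vinner_vbisector_right[OF pd] k_def)
  moreover have "vinner V w w * vinner V (vbisector V p q) (vbisector V p q)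
      = k\<^sup>2 * (2 * (1 + vcos V p q))"
    by (simp add: vinner_vbisector_self[OF pd] k_def power_mult_distrib
        flip: power2_vnorm[OF pd, of w])
  ultimately have "(k * (vcos V w p + vcos V w q))\<^sup>2 \<le> k\<^sup>2 * (2 * (1 + vcos V p q))"
    using vinner_Cauchy_Schwarz[OF pd, of w "vbisector V p q"] by simp
  then have "(vcos V w p + vcos V w q)\<^sup>2 \<le> 2 * (1 + vcos V p q)"
    using \<open>k > 0\<close> by (simp add: power_mult_distrib)
  moreover have "4 * (vcos V w p * vcos V w q) \<le> (vcos V w p + vcos V w q)\<^sup>2"
    using zero_le_power2[of "vcos V w p - vcos V w q"] by (simp add: power2_eq_square algebra_simps)
  ultimately show ?thesis
    by simp
qed

lemma vcos_mult_vcos_bisecting: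
  assumes pd: "pos_definite V"
    and "vangle V w p = vangle V p q / 2" "vangle V w q = vangle V p q / 2"
  shows "vcos V w p * vcos V w q = (1 + vcos V p q) / 2"
proof -
  have "vcos V w p = cos (vangle V p q / 2)" "vcos V w q = cos (vangle V p q / 2)"
    by (metis assms(2,3) cos_vangle[OF pd])+
  then show ?thesis
    using cos_half_arccos_squared[OF abs_vcos_le_1[OF pd, of p q]]
    by (simp add: vangle_def power2_eq_square)
qed

lemma vorthogonal_to_antipodal_exists:
  fixes V :: "real^'n^'n" and p q :: "real^'n"
  assumes pd: "pos_definite V" and "p \<noteq> 0" "q \<noteq> 0" and "vcos V p q = -1"
    and "2 \<le> CARD('n)"
  obtains y where "y \<noteq> 0" "vcos V y p = 0" "vcos V y q = 0"
proof -
  obtain y where "y \<noteq> 0" "orthogonal (V *v p) y"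
    using orthogonal_to_vector_exists[of "V *v p"] assms(5) by auto
  then have yp: "vinner V y p = 0"
    by (simp add: vinner_def orthogonal_def inner_commute)
  have "vinner V (vbisector V p q) (vbisector V p q) = 0"
    using assms(4) by (simp add: vinner_vbisector_self[OF pd])
  then have "vbisector V p q = 0"
    by (simp add: vinner_self_eq_0[OF pd])
  moreover have "vinner V y (vbisector V p q)
      = vnorm V q * vinner V y p + vnorm V p * vinner V y q"
    by (simp add: vbisector_def vinner_add_right vinner_scaleR_right)
  ultimately have "vnorm V p * vinner V y q = 0"
    using yp by simp
  then have "vinner V y q = 0"
    using vnorm_pos[OF pd assms(2)] by simp
  then show ?thesis
    using that \<open>y \<noteq> 0\<close> yp by (simp add: vcos_def)
qed

lemma bisecting_direction_exists:
  fixes V :: "real^'n^'n" and p q :: "real^'n"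
  assumes pd: "pos_definite V" and "p \<noteq> 0" "q \<noteq> 0"
    and "vangle V p q < pi \<or> 2 \<le> CARD('n)"
  shows "\<exists>w. w \<noteq> 0 \<and> vangle V w p = vangle V p q / 2 \<and> vangle V w q = vangle V p q / 2"
proof (cases "vcos V p q = -1")
  case True
  then have "vangle V p q = pi"
    by (simp add: vangle_def)
  then obtain y where "y \<noteq> 0" "vcos V y p = 0" "vcos V y q = 0"
    using vorthogonal_to_antipodal_exists[OF assms(1-3) True] assms(4) by auto
  then show ?thesis
    using \<open>vangle V p q = pi\<close> by (auto simp: vangle_def)
next
  case False
  then have "-1 < vcos V p q"
    using abs_vcos_le_1[OF pd, of p q] by (auto simp: abs_le_iff)
  then show ?thesis
    using vbisector_nonzero[OF assms(1-3)] vangle_vbisector[OF assms(1-3)] by blast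
qed

lemma hfun_eq_vcos_mult_vcos:
  assumes pd: "pos_definite V"
  shows "hfun A (V *v p) (V *v q) V w
    = vnorm V p * vnorm V q / (norm A)\<^sup>2 * (vcos V w p * vcos V w q)"
proof (cases "w = 0")
  case False
  have "hfun A (V *v p) (V *v q) V w
      = vinner V w p * vinner V w q / ((norm A)\<^sup>2 * (vnorm V w)\<^sup>2)"
    by (simp add: hfun_def vinner_def power2_vnorm[OF pd])
  also have "\<dots> = vnorm V p * vnorm V q / (norm A)\<^sup>2 * (vcos V w p * vcos V w q)"
    using vnorm_pos[OF pd False]
    by (simp add: vinner_eq_vcos_mult[OF pd, of w] power2_eq_square)
  finally show ?thesis .
qed (simp add: hfun_def vcos_def)

theorem proposition1:
  fixes X :: "real^'p^'n" and A Y :: "real^'n"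
    and a z p q :: "real^'p" and V :: "real^'p^'p" and \<phi> :: real
  assumes "A \<noteq> 0"
    and "a = transpose X *v A"
    and "z = transpose X *v Y - ((A \<bullet> Y) / (norm A)\<^sup>2) *\<^sub>R a"
    and "V = transpose X ** X - (1 / (norm A)\<^sup>2) *\<^sub>R outer a a"
    and "pos_definite V"
    and "p = matrix_inv V *v a" and "q = matrix_inv V *v z"
    and "p \<noteq> 0" and "q \<noteq> 0"
    and "\<phi> = vangle V p q"
  shows "(\<forall>ws. ws \<noteq> 0 \<and> vangle V ws p = \<phi> / 2 \<and> vangle V ws q = \<phi> / 2 \<longrightarrow>
            (\<forall>w. w \<noteq> 0 \<longrightarrow> vcos V w p * vcos V w q \<le> vcos V ws p * vcos V ws q)
          \<and> hfun A a z V ws = vnorm V p * vnorm V q / (norm A)\<^sup>2 * ((1 + cos \<phi>) / 2))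
       \<and> ((\<phi> < pi \<or> CARD('p) \<ge> 2) \<longrightarrow>
            (\<exists>ws. ws \<noteq> 0 \<and> vangle V ws p = \<phi> / 2 \<and> vangle V ws q = \<phi> / 2))"
proof -
  note pd = \<open>pos_definite V\<close>
  have a: "a = V *v p" and z: "z = V *v q"
    using assms(6,7) by (simp_all add: pos_definite_right_inverse[OF pd])
  have cos_\<phi>: "cos \<phi> = vcos V p q"
    using assms(10) cos_vangle[OF pd] by simp
  have "(\<forall>w. w \<noteq> 0 \<longrightarrow> vcos V w p * vcos V w q \<le> vcos V ws p * vcos V ws q)
      \<and> hfun A a z V ws = vnorm V p * vnorm V q / (norm A)\<^sup>2 * ((1 + cos \<phi>) / 2)"
    if "vangle V ws p = \<phi> / 2" "vangle V ws q = \<phi> / 2" for ws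
  proof -
    have product: "vcos V ws p * vcos V ws q = (1 + cos \<phi>) / 2"
      using vcos_mult_vcos_bisecting[OF pd] that assms(10) cos_\<phi> by simp
    show ?thesis
      unfolding a z hfun_eq_vcos_mult_vcos[OF pd] product cos_\<phi>
      using vcos_mult_vcos_le[OF pd] by simp
  qed
  moreover have "\<exists>ws. ws \<noteq> 0 \<and> vangle V ws p = \<phi> / 2 \<and> vangle V ws q = \<phi> / 2"
    if "\<phi> < pi \<or> CARD('p) \<ge> 2"
    using bisecting_direction_exists[OF pd assms(8,9)] that assms(10) by simp
  ultimately show ?thesis
    by blast
qed

end
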